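(* A frame $L$ is subfit if and only if the coframe $(\mathsf{Ex}(L),\sqsubseteq)$ of exact filters is a Boolean algebra.
   Context: A frame is a complete lattice $L$ with $(\bigvee A)\wedge b=\bigvee_{a\in A}(a\wedge b)$. $L$ is subfit if for all $a,b$: whenever ($\forall c$, $a\vee c=1\Rightarrow b\vee c=1$) then $a\le b$. A filter is a nonempty up-closed subset closed under finite meets. A meet $\bigwedge M$ is exact if $(\bigwedge M)\vee b=\bigwedge_{a\in M}(a\vee b)$ for all $b$; $\mathsf{Ex}(L)$ is the set of filters containing every exact meet of their subsets, ordered by reverse inclusion $F\sqsubseteq G$ iff $G\subseteq F$ (it is a coframe in which joins are intersections). *)

theory Defs
  imports Main
begin

definition is_frame :: "'a::complete_lattice itself \<Rightarrow> bool" where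
  "is_frame _ \<longleftrightarrow> (\<forall>(A::'a set) b. inf (Sup A) b = Sup ((\<lambda>a. inf a b) ` A))"

definition subfit :: "'a::complete_lattice itself \<Rightarrow> bool" where
  "subfit _ \<longleftrightarrow> (\<forall>(a::'a) b. (\<forall>c. sup a c = top \<longrightarrow> sup b c = top) \<longrightarrow> a \<le> b)"

definition is_filter :: "'a::complete_lattice set \<Rightarrow> bool" where
  "is_filter F \<longleftrightarrow> F \<noteq> {} \<and> (\<forall>a\<in>F. \<forall>b. a \<le> b \<longrightarrow> b \<in> F) \<and> (\<forall>a\<in>F. \<forall>b\<in>F. inf a b \<in> F)"

definition exact_meet :: "'a::complete_lattice set \<Rightarrow> bool" where
  "exact_meet M \<longleftrightarrow> (\<forall>b. sup (Inf M) b = Inf ((\<lambda>a. sup a b) ` M))"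

definition exact_filters :: "'a::complete_lattice set set" where
  "exact_filters = {F. is_filter F \<and> (\<forall>M. M \<subseteq> F \<and> exact_meet M \<longrightarrow> Inf M \<in> F)}"

definition ex_le :: "'a set \<Rightarrow> 'a set \<Rightarrow> bool" where
  "ex_le F G \<longleftrightarrow> G \<subseteq> F"

definition is_sup_in :: "'b set \<Rightarrow> ('b \<Rightarrow> 'b \<Rightarrow> bool) \<Rightarrow> 'b \<Rightarrow> 'b \<Rightarrow> 'b \<Rightarrow> bool" where
  "is_sup_in S le x y z \<longleftrightarrow> z \<in> S \<and> le x z \<and> le y z \<and> (\<forall>w\<in>S. le x w \<and> le y w \<longrightarrow> le z w)"

definition is_inf_in :: "'b set \<Rightarrow> ('b \<Rightarrow> 'b \<Rightarrow> bool) \<Rightarrow> 'b \<Rightarrow> 'b \<Rightarrow> 'b \<Rightarrow> bool" where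
  "is_inf_in S le x y z \<longleftrightarrow> z \<in> S \<and> le z x \<and> le z y \<and> (\<forall>w\<in>S. le w x \<and> le w y \<longrightarrow> le w z)"

definition boolean_poset :: "'b set \<Rightarrow> ('b \<Rightarrow> 'b \<Rightarrow> bool) \<Rightarrow> bool" where
  "boolean_poset S le \<longleftrightarrow>
     (\<forall>x\<in>S. le x x) \<and>
     (\<forall>x\<in>S. \<forall>y\<in>S. le x y \<and> le y x \<longrightarrow> x = y) \<and>
     (\<forall>x\<in>S. \<forall>y\<in>S. \<forall>z\<in>S. le x y \<and> le y z \<longrightarrow> le x z) \<and>
     (\<exists>b\<in>S. \<forall>x\<in>S. le b x) \<and>
     (\<exists>t\<in>S. \<forall>x\<in>S. le x t) \<and>
     (\<forall>x\<in>S. \<forall>y\<in>S. \<exists>z. is_sup_in S le x y z) \<and>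
     (\<forall>x\<in>S. \<forall>y\<in>S. \<exists>z. is_inf_in S le x y z) \<and>
     (\<forall>x\<in>S. \<forall>y\<in>S. \<forall>z\<in>S. \<forall>yz xyz xy xz r.
        is_sup_in S le y z yz \<and> is_inf_in S le x yz xyz \<and>
        is_inf_in S le x y xy \<and> is_inf_in S le x z xz \<and> is_sup_in S le xy xz r
        \<longrightarrow> xyz = r) \<and>
     (\<forall>x\<in>S. \<exists>y\<in>S. (\<forall>w\<in>S. le w x \<and> le w y \<longrightarrow> (\<forall>v\<in>S. le w v)) \<and>
                     (\<forall>w\<in>S. le x w \<and> le y w \<longrightarrow> (\<forall>v\<in>S. le v w)))"

end

theory Submission
  imports Defs
begin

text \<open>In a frame, the exact filter generated by an up-set U consists of those x all of whose
  upper bounds are meets of elements of U. Since joins in Ex(L) are intersections, Ex(L) is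
  always a distributive lattice, so it is Boolean iff every exact filter has a complement.
  Under subfitness the complement of F is its co-annihilator {x. \<forall>c\<in>F. x \<squnion> c = 1}: if
  d is the meet of the elements of F and of the co-annihilator above y, then d \<squnion> c = 1 forces
  y \<squnion> c into the co-annihilator, hence y \<squnion> c = 1, and subfitness gives d = y.
  Conversely, suppose a \<squnion> c = 1 always implies b \<squnion> c = 1, and let N be the complement
  of the principal filter {a..}. Then {b..} \<inter> N = {1}, and distributivity yields
  {b..} \<subseteq> hull({a..} \<union> {b..}) \<inter> hull({a..} \<union> N) = hull({a..} \<union> ({b..} \<inter> N)) = {a..},
  that is, a \<le> b.\<close>

lemma frame_inf_sup_distrib:
  assumes "is_frame TYPE('a::complete_lattice)"
  shows "inf (sup x y) (z::'a) = sup (inf x z) (inf y z)"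
  using assms[unfolded is_frame_def, rule_format, of "{x, y}" z] by simp

lemma frame_sup_inf_distrib:
  assumes "is_frame TYPE('a::complete_lattice)"
  shows "sup (inf x y) (z::'a) = inf (sup x z) (sup y z)"
proof -
  have "inf (sup x z) (sup y z) = sup (inf x (sup y z)) (inf z (sup y z))"
    using frame_inf_sup_distrib[OF assms] .
  also have "inf x (sup y z) = sup (inf y x) (inf z x)"
    using frame_inf_sup_distrib[OF assms] by (simp add: inf_commute)
  also have "inf z (sup y z) = z"
    by (simp add: inf_absorb1)
  finally have "inf (sup x z) (sup y z) = sup (sup (inf y x) (inf z x)) z" .
  also have "\<dots> = sup (inf x y) z"
    by (rule antisym) (auto simp: inf_commute intro: le_supI1 le_supI2)
  finally show ?thesis by simp
qed

lemma exact_filtersI: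
  assumes "top \<in> F" "\<And>a b. a \<in> F \<Longrightarrow> a \<le> b \<Longrightarrow> b \<in> F"
    "\<And>a b. a \<in> F \<Longrightarrow> b \<in> F \<Longrightarrow> inf a b \<in> F"
    "\<And>M. M \<subseteq> F \<Longrightarrow> exact_meet M \<Longrightarrow> Inf M \<in> F"
  shows "F \<in> exact_filters"
  using assms unfolding exact_filters_def is_filter_def by blast

lemma exact_filter_top: "F \<in> exact_filters \<Longrightarrow> top \<in> F"
  unfolding exact_filters_def is_filter_def by auto

lemma exact_filter_upward: "F \<in> exact_filters \<Longrightarrow> a \<in> F \<Longrightarrow> a \<le> b \<Longrightarrow> b \<in> F"
  unfolding exact_filters_def is_filter_def by auto

lemma exact_filter_inf: "F \<in> exact_filters \<Longrightarrow> a \<in> F \<Longrightarrow> b \<in> F \<Longrightarrow> inf a b \<in> F"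
  unfolding exact_filters_def is_filter_def by auto

lemma exact_filter_Inf: "F \<in> exact_filters \<Longrightarrow> M \<subseteq> F \<Longrightarrow> exact_meet M \<Longrightarrow> Inf M \<in> F"
  unfolding exact_filters_def by auto

lemma UNIV_exact_filter: "(UNIV :: 'a::complete_lattice set) \<in> exact_filters"
  by (rule exact_filtersI) auto

lemma top_exact_filter: "{top :: 'a::complete_lattice} \<in> exact_filters"
  by (rule exact_filtersI) (auto simp: top_unique)

lemma atLeast_exact_filter: "{a :: 'a::complete_lattice..} \<in> exact_filters"
  by (rule exact_filtersI) (auto intro: order_trans Inf_greatest)

lemma Int_exact_filter:
  "F \<in> exact_filters \<Longrightarrow> G \<in> exact_filters \<Longrightarrow> F \<inter> G \<in> exact_filters"
  by (rule exact_filtersI)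
    (auto intro: exact_filter_top exact_filter_upward exact_filter_inf exact_filter_Inf)

definition meet_of :: "'a::complete_lattice set \<Rightarrow> 'a \<Rightarrow> bool" where
  "meet_of U y \<longleftrightarrow> Inf {u\<in>U. y \<le> u} \<le> y"

lemma meet_of_mem: "y \<in> U \<Longrightarrow> meet_of U y"
  unfolding meet_of_def by (simp add: Inf_lower)

lemma meet_of_mono:
  assumes "U \<subseteq> V" "meet_of U y"
  shows "meet_of V y"
proof -
  have "Inf {u\<in>V. y \<le> u} \<le> Inf {u\<in>U. y \<le> u}"
    by (rule Inf_superset_mono) (use assms(1) in blast)
  then show ?thesis
    using assms(2) unfolding meet_of_def by (rule order_trans)
qed

lemma meet_of_Inf:
  assumes "\<And>s. s \<in> S \<Longrightarrow> meet_of U s"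
  shows "meet_of U (Inf S)"
  unfolding meet_of_def
proof (rule Inf_greatest)
  fix s assume s: "s \<in> S"
  have "Inf {u\<in>U. Inf S \<le> u} \<le> Inf {u\<in>U. s \<le> u}"
    by (rule Inf_superset_mono) (use s Inf_lower order_trans in blast)
  also have "\<dots> \<le> s"
    using assms s unfolding meet_of_def by blast
  finally show "Inf {u\<in>U. Inf S \<le> u} \<le> s" .
qed

definition exact_hull :: "'a::complete_lattice set \<Rightarrow> 'a set" where
  "exact_hull U = {x. \<forall>y. x \<le> y \<longrightarrow> meet_of U y}"

lemma exact_hull_mono: "U \<subseteq> V \<Longrightarrow> exact_hull U \<subseteq> exact_hull V"
  unfolding exact_hull_def using meet_of_mono by blast

lemma subset_exact_hull:
  assumes "\<And>u v. u \<in> U \<Longrightarrow> u \<le> v \<Longrightarrow> v \<in> U"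
  shows "U \<subseteq> exact_hull U"
  using assms unfolding exact_hull_def by (auto intro: meet_of_mem)

lemma Un_subset_exact_hull:
  "F \<in> exact_filters \<Longrightarrow> G \<in> exact_filters \<Longrightarrow> F \<union> G \<subseteq> exact_hull (F \<union> G)"
  by (rule subset_exact_hull) (use exact_filter_upward in blast)

text \<open>The meet of the elements of F above x is x itself, and it is exact because the same holds
  for every upper bound x \<squnion> b of x.\<close>
lemma exact_hull_exact_filter_subset:
  assumes F: "F \<in> exact_filters"
  shows "exact_hull F \<subseteq> F"
proof
  fix x assume x: "x \<in> exact_hull F"
  define M where "M = {u\<in>F. x \<le> u}"
  have Inf_M: "Inf M = x"
  proof (rule antisym)
    show "Inf M \<le> x" using x unfolding exact_hull_def meet_of_def M_def by blast
    show "x \<le> Inf M" unfolding M_def by (auto intro: Inf_greatest)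
  qed
  have "exact_meet M"
    unfolding exact_meet_def
  proof
    fix b
    show "sup (Inf M) b = Inf ((\<lambda>a. sup a b) ` M)"
    proof (rule antisym)
      show "sup (Inf M) b \<le> Inf ((\<lambda>a. sup a b) ` M)"
      proof (rule Inf_greatest)
        fix t assume "t \<in> (\<lambda>a. sup a b) ` M"
        then obtain u where "x \<le> u" "t = sup u b" unfolding M_def by blast
        then show "sup (Inf M) b \<le> t" by (simp add: Inf_M le_supI1)
      qed
      have "Inf ((\<lambda>a. sup a b) ` M) \<le> Inf {u\<in>F. sup x b \<le> u}"
      proof (rule Inf_greatest)
        fix t assume t: "t \<in> {u\<in>F. sup x b \<le> u}"
        then have "t = sup t b" "t \<in> M" unfolding M_def by (auto simp: sup_absorb1)
        then show "Inf ((\<lambda>a. sup a b) ` M) \<le> t"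
          by (metis INF_lower)
      qed
      also have "\<dots> \<le> sup x b"
        using x unfolding exact_hull_def meet_of_def by (simp del: sup.bounded_iff)
      finally show "Inf ((\<lambda>a. sup a b) ` M) \<le> sup (Inf M) b"
        by (simp add: Inf_M)
    qed
  qed
  moreover have "M \<subseteq> F" unfolding M_def by auto
  ultimately show "x \<in> F" using exact_filter_Inf[OF F] Inf_M by blast
qed

lemma exact_hull_least: "U \<subseteq> F \<Longrightarrow> F \<in> exact_filters \<Longrightarrow> exact_hull U \<subseteq> F"
  using exact_hull_mono exact_hull_exact_filter_subset by blast

lemma exact_hull_exact_filter:
  assumes frame: "is_frame TYPE('a::complete_lattice)"
  shows "exact_hull (U::'a set) \<in> exact_filters"
proof (rule exact_filtersI)
  show "top \<in> exact_hull U"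
    unfolding exact_hull_def meet_of_def by (auto simp: top_unique)
  show "b \<in> exact_hull U" if "a \<in> exact_hull U" "a \<le> b" for a b
    using that unfolding exact_hull_def by (auto intro: order_trans)
  show "inf a b \<in> exact_hull U" if "a \<in> exact_hull U" "b \<in> exact_hull U" for a b
    unfolding exact_hull_def
  proof (intro CollectI allI impI)
    fix z assume "inf a b \<le> z"
    then have "z = inf (sup a z) (sup b z)"
      using frame_sup_inf_distrib[OF frame, of a b z] by (simp add: sup_absorb2)
    moreover have "meet_of U (Inf {sup a z, sup b z})"
      by (rule meet_of_Inf) (use that in \<open>auto simp: exact_hull_def\<close>)
    ultimately show "meet_of U z" by simp
  qed
  show "Inf M \<in> exact_hull U" if M: "M \<subseteq> exact_hull U" and "exact_meet M" for M
    unfolding exact_hull_def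
  proof (intro CollectI allI impI)
    fix z assume "Inf M \<le> z"
    then have "z = Inf ((\<lambda>a. sup a z) ` M)"
      using \<open>exact_meet M\<close> unfolding exact_meet_def by (metis sup_absorb2)
    moreover have "meet_of U (Inf ((\<lambda>a. sup a z) ` M))"
      by (rule meet_of_Inf) (use M in \<open>auto simp: exact_hull_def\<close>)
    ultimately show "meet_of U z" by simp
  qed
qed

lemma exact_hull_Un_Int_superset:
  assumes Z_up: "\<And>u v. u \<in> Z \<Longrightarrow> u \<le> v \<Longrightarrow> v \<in> Z"
  shows "exact_hull (X \<union> Y) \<inter> exact_hull (X \<union> Z) \<subseteq> exact_hull (X \<union> (Y \<inter> Z))"
proof
  fix p assume p: "p \<in> exact_hull (X \<union> Y) \<inter> exact_hull (X \<union> Z)"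
  show "p \<in> exact_hull (X \<union> (Y \<inter> Z))"
    unfolding exact_hull_def
  proof (intro CollectI allI impI)
    fix q assume "p \<le> q"
    define N where "N = {u\<in>X \<union> Z. q \<le> u}"
    have "Inf N = q"
      using p \<open>p \<le> q\<close> unfolding exact_hull_def meet_of_def N_def
      by (auto intro: antisym Inf_greatest)
    moreover have "meet_of (X \<union> (Y \<inter> Z)) n" if n: "n \<in> N" for n
    proof (cases "n \<in> X")
      case True
      then show ?thesis by (simp add: meet_of_mem)
    next
      case False
      then have "n \<in> Z" "q \<le> n" using n unfolding N_def by auto
      have "meet_of (X \<union> Y) n"
        using p \<open>p \<le> q\<close> \<open>q \<le> n\<close> unfolding exact_hull_def by (auto intro: order_trans)
      \<comment> \<open>above n \<in> Z, every element of Y already lies in Y \<inter> Z\<close>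
      moreover have "Inf {k\<in>X \<union> (Y \<inter> Z). n \<le> k} \<le> Inf {k\<in>X \<union> Y. n \<le> k}"
        by (rule Inf_superset_mono) (use Z_up \<open>n \<in> Z\<close> in blast)
      ultimately show ?thesis
        unfolding meet_of_def by (rule order_trans[rotated])
    qed
    ultimately show "meet_of (X \<union> (Y \<inter> Z)) q"
      using meet_of_Inf by metis
  qed
qed

lemma exact_hull_Un_Int:
  assumes frame: "is_frame TYPE('a::complete_lattice)"
    and X: "X \<in> exact_filters" and Y: "Y \<in> exact_filters" and Z: "Z \<in> exact_filters"
  shows "exact_hull (X \<union> (Y \<inter> Z)) = exact_hull (X \<union> Y) \<inter> exact_hull (X \<union> (Z::'a set))"
proof
  show "exact_hull (X \<union> Y) \<inter> exact_hull (X \<union> Z) \<subseteq> exact_hull (X \<union> (Y \<inter> Z))"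
    by (rule exact_hull_Un_Int_superset) (use Z exact_filter_upward in blast)
  have "X \<union> Y \<subseteq> exact_hull (X \<union> Y)" "X \<union> Z \<subseteq> exact_hull (X \<union> Z)"
    using Un_subset_exact_hull[OF X Y] Un_subset_exact_hull[OF X Z] .
  then show "exact_hull (X \<union> (Y \<inter> Z)) \<subseteq> exact_hull (X \<union> Y) \<inter> exact_hull (X \<union> Z)"
    by (intro exact_hull_least Int_exact_filter exact_hull_exact_filter[OF frame]) blast
qed

lemma is_sup_in_exact_filters_iff:
  assumes "F \<in> exact_filters" "G \<in> exact_filters"
  shows "is_sup_in exact_filters ex_le F G H \<longleftrightarrow> H = F \<inter> G"
  using Int_exact_filter[OF assms] unfolding is_sup_in_def ex_le_def by blast

lemma is_inf_in_exact_filters_iff: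
  assumes frame: "is_frame TYPE('a::complete_lattice)"
    and "F \<in> exact_filters" "G \<in> exact_filters"
  shows "is_inf_in exact_filters ex_le F G H \<longleftrightarrow> H = exact_hull (F \<union> (G::'a set))"
proof -
  let ?E = "exact_hull (F \<union> G)"
  have "F \<union> G \<subseteq> ?E"
    using assms(2,3) by (rule Un_subset_exact_hull)
  then have "is_inf_in exact_filters ex_le F G ?E"
    unfolding is_inf_in_def ex_le_def
    using exact_hull_exact_filter[OF frame] exact_hull_least[of "F \<union> G"] by simp
  moreover have "H = ?E" if "is_inf_in exact_filters ex_le F G H" "is_inf_in exact_filters ex_le F G ?E"
    using that unfolding is_inf_in_def ex_le_def by (meson subset_antisym)
  ultimately show ?thesis by blast
qed

lemma exact_filters_distrib:
  assumes frame: "is_frame TYPE('a::complete_lattice)"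
    and xyz: "x \<in> exact_filters" "y \<in> exact_filters" "z \<in> (exact_filters :: 'a set set)"
    and "is_sup_in exact_filters ex_le y z yz" "is_inf_in exact_filters ex_le x yz xyz"
      "is_inf_in exact_filters ex_le x y xy" "is_inf_in exact_filters ex_le x z xz"
      "is_sup_in exact_filters ex_le xy xz r"
  shows "xyz = r"
proof -
  have "yz = y \<inter> z" "xyz = exact_hull (x \<union> yz)"
    "r = exact_hull (x \<union> y) \<inter> exact_hull (x \<union> z)"
    using assms by (auto simp: is_sup_in_exact_filters_iff is_inf_in_exact_filters_iff[OF frame]
        Int_exact_filter exact_hull_exact_filter[OF frame])
  then show "xyz = r"
    using exact_hull_Un_Int[OF frame xyz] by simp
qed

lemma exact_filters_complement_iff:
  assumes frame: "is_frame TYPE('a::complete_lattice)"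
    and F: "F \<in> exact_filters" and G: "G \<in> (exact_filters :: 'a set set)"
  shows "(\<forall>w\<in>exact_filters. ex_le w F \<and> ex_le w G \<longrightarrow> (\<forall>v\<in>exact_filters. ex_le w v)) \<and>
      (\<forall>w\<in>exact_filters. ex_le F w \<and> ex_le G w \<longrightarrow> (\<forall>v\<in>exact_filters. ex_le v w)) \<longleftrightarrow>
    F \<inter> G = {top} \<and> exact_hull (F \<union> G) = UNIV"
    (is "?bottom \<and> ?top \<longleftrightarrow> _")
proof
  assume compl: "?bottom \<and> ?top"
  have "ex_le (exact_hull (F \<union> G)) UNIV"
    by (rule compl[THEN conjunct1, rule_format])
      (use Un_subset_exact_hull[OF F G] exact_hull_exact_filter[OF frame] UNIV_exact_filter
        in \<open>auto simp: ex_le_def\<close>)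
  moreover have "ex_le {top} (F \<inter> G)"
    by (rule compl[THEN conjunct2, rule_format])
      (use Int_exact_filter[OF F G] top_exact_filter in \<open>auto simp: ex_le_def\<close>)
  ultimately show "F \<inter> G = {top} \<and> exact_hull (F \<union> G) = UNIV"
    using exact_filter_top[OF F] exact_filter_top[OF G] unfolding ex_le_def by blast
next
  assume R: "F \<inter> G = {top} \<and> exact_hull (F \<union> G) = UNIV"
  show "?bottom \<and> ?top"
    unfolding ex_le_def
  proof (intro conjI ballI impI)
    fix w v assume "w \<in> exact_filters" "F \<subseteq> w \<and> G \<subseteq> w"
    then have "exact_hull (F \<union> G) \<subseteq> w" by (intro exact_hull_least) auto
    then show "v \<subseteq> w" using R by blast
  next
    fix w v :: "'a set" assume "v \<in> exact_filters" "w \<subseteq> F \<and> w \<subseteq> G"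
    then have "w \<subseteq> {top}" using R by blast
    then show "w \<subseteq> v" using exact_filter_top[OF \<open>v \<in> exact_filters\<close>] by blast
  qed
qed

lemma boolean_poset_exact_filters_iff:
  assumes frame: "is_frame TYPE('a::complete_lattice)"
  shows "boolean_poset (exact_filters :: 'a set set) ex_le \<longleftrightarrow>
    (\<forall>F\<in>exact_filters. \<exists>G\<in>exact_filters. F \<inter> G = {top::'a} \<and> exact_hull (F \<union> G) = UNIV)"
proof -
  let ?S = "exact_filters :: 'a set set"
  have order: "\<forall>x\<in>?S. ex_le x x" "\<forall>x\<in>?S. \<forall>y\<in>?S. ex_le x y \<and> ex_le y x \<longrightarrow> x = y"
    "\<forall>x\<in>?S. \<forall>y\<in>?S. \<forall>z\<in>?S. ex_le x y \<and> ex_le y z \<longrightarrow> ex_le x z"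
    unfolding ex_le_def by auto
  have bounds: "\<exists>b\<in>?S. \<forall>x\<in>?S. ex_le b x" "\<exists>t\<in>?S. \<forall>x\<in>?S. ex_le x t"
    using UNIV_exact_filter top_exact_filter exact_filter_top unfolding ex_le_def by blast+
  have lattice: "\<forall>x\<in>?S. \<forall>y\<in>?S. \<exists>z. is_sup_in ?S ex_le x y z"
    "\<forall>x\<in>?S. \<forall>y\<in>?S. \<exists>z. is_inf_in ?S ex_le x y z"
    by (simp_all add: is_sup_in_exact_filters_iff is_inf_in_exact_filters_iff[OF frame])
  have distrib: "\<forall>x\<in>?S. \<forall>y\<in>?S. \<forall>z\<in>?S. \<forall>yz xyz xy xz r.
      is_sup_in ?S ex_le y z yz \<and> is_inf_in ?S ex_le x yz xyz \<and>
      is_inf_in ?S ex_le x y xy \<and> is_inf_in ?S ex_le x z xz \<and> is_sup_in ?S ex_le xy xz r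
      \<longrightarrow> xyz = r"
    by (intro ballI allI impI, elim conjE, rule exact_filters_distrib[OF frame]; assumption)
  have "boolean_poset ?S ex_le \<longleftrightarrow>
    (\<forall>F\<in>?S. \<exists>G\<in>?S. (\<forall>w\<in>?S. ex_le w F \<and> ex_le w G \<longrightarrow> (\<forall>v\<in>?S. ex_le w v)) \<and>
      (\<forall>w\<in>?S. ex_le F w \<and> ex_le G w \<longrightarrow> (\<forall>v\<in>?S. ex_le v w)))"
    unfolding boolean_poset_def
    by (intro iffI conjI order bounds lattice distrib) (elim conjE, assumption)+
  also have "\<dots> \<longleftrightarrow> (\<forall>F\<in>?S. \<exists>G\<in>?S. F \<inter> G = {top} \<and> exact_hull (F \<union> G) = UNIV)"
    by (intro ball_cong bex_cong refl exact_filters_complement_iff[OF frame])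
  finally show ?thesis .
qed

definition coannihilator :: "'a::complete_lattice set \<Rightarrow> 'a set" where
  "coannihilator F = {x. \<forall>c\<in>F. sup x c = top}"

lemma sup_eq_top_mono:
  "sup a c = top \<Longrightarrow> a \<le> b \<Longrightarrow> sup b c = (top::'a::{semilattice_sup, order_top})"
  using sup_mono[of a b c c] by (simp add: top_unique)

lemma coannihilator_exact_filter:
  assumes frame: "is_frame TYPE('a::complete_lattice)"
  shows "coannihilator (F::'a set) \<in> exact_filters"
proof (rule exact_filtersI)
  show "top \<in> coannihilator F"
    unfolding coannihilator_def by simp
  show "b \<in> coannihilator F" if "a \<in> coannihilator F" "a \<le> b" for a b
    using that unfolding coannihilator_def by (blast intro: sup_eq_top_mono)
  show "inf a b \<in> coannihilator F" if "a \<in> coannihilator F" "b \<in> coannihilator F" for a b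
    using that unfolding coannihilator_def by (simp add: frame_sup_inf_distrib[OF frame])
  show "Inf M \<in> coannihilator F" if "M \<subseteq> coannihilator F" "exact_meet M" for M
    unfolding coannihilator_def
  proof (intro CollectI ballI)
    fix c assume "c \<in> F"
    have "sup (Inf M) c = Inf ((\<lambda>a. sup a c) ` M)"
      using \<open>exact_meet M\<close> unfolding exact_meet_def by blast
    also have "\<dots> = top"
      using that \<open>c \<in> F\<close> unfolding coannihilator_def by auto
    finally show "sup (Inf M) c = top" .
  qed
qed

lemma Int_coannihilator: "F \<in> exact_filters \<Longrightarrow> F \<inter> coannihilator F = {top}"
  unfolding coannihilator_def using exact_filter_top by fastforce

lemma meet_of_Un_coannihilator:
  assumes subfit: "subfit TYPE('a::complete_lattice)" and F: "F \<in> exact_filters"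
  shows "meet_of (F \<union> coannihilator F) (y::'a)"
proof -
  define d where "d = Inf {u\<in>F \<union> coannihilator F. y \<le> u}"
  have "sup y c = top" if dc: "sup d c = top" for c
  proof -
    have "sup (sup y c) f = top" if "f \<in> F" for f
    proof -
      have "d \<le> sup f y"
        unfolding d_def using exact_filter_upward[OF F that] by (auto intro: Inf_lower)
      then have "sup (sup f y) c = top"
        by (rule sup_eq_top_mono[OF dc])
      then show ?thesis
        by (simp add: ac_simps)
    qed
    then have "d \<le> sup y c"
      unfolding d_def coannihilator_def by (auto intro: Inf_lower)
    then show "sup y c = top"
      using sup_eq_top_mono[OF dc] by (metis sup.right_idem)
  qed
  then have "d \<le> y"
    using subfit unfolding subfit_def by blast
  then show ?thesis
    unfolding meet_of_def d_def .
qed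

lemma exact_hull_Un_coannihilator:
  assumes "subfit TYPE('a::complete_lattice)" "F \<in> exact_filters"
  shows "exact_hull (F \<union> coannihilator F) = (UNIV :: 'a set)"
  unfolding exact_hull_def by (simp add: meet_of_Un_coannihilator[OF assms])

lemma subfit_if_exact_filters_complemented:
  assumes frame: "is_frame TYPE('a::complete_lattice)"
    and complemented: "\<forall>F\<in>exact_filters. \<exists>G\<in>exact_filters.
      F \<inter> G = {top::'a} \<and> exact_hull (F \<union> G) = UNIV"
  shows "subfit TYPE('a)"
  unfolding subfit_def
proof (intro allI impI)
  fix a b :: 'a
  assume ab: "\<forall>c. sup a c = top \<longrightarrow> sup b c = top"
  obtain N where N: "N \<in> exact_filters" "{a..} \<inter> N = {top}" "exact_hull ({a..} \<union> N) = UNIV"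
    using complemented[rule_format, OF atLeast_exact_filter[of a]] by blast
  have b_N: "sup b n = top" if "n \<in> N" for n
  proof -
    have "sup a n \<in> {a..} \<inter> N"
      using exact_filter_upward[OF N(1) that] by simp
    then have "sup a n = top"
      using N(2) by blast
    then show ?thesis
      using ab by simp
  qed
  have "{b..} \<inter> N \<subseteq> {top}"
  proof
    fix t assume "t \<in> {b..} \<inter> N"
    then have "b \<le> t" "sup b t = top" using b_N by auto
    then show "t \<in> {top}" by (simp add: sup_absorb2)
  qed
  have "{b..} \<subseteq> exact_hull ({a..} \<union> {b..}) \<inter> exact_hull ({a..} \<union> N)"
    using Un_subset_exact_hull[OF atLeast_exact_filter atLeast_exact_filter] N(3) by blast
  also have "\<dots> = exact_hull ({a..} \<union> ({b..} \<inter> N))"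
    using exact_hull_Un_Int[OF frame atLeast_exact_filter atLeast_exact_filter N(1)] by simp
  also have "\<dots> \<subseteq> {a..}"
    using \<open>{b..} \<inter> N \<subseteq> {top}\<close> by (intro exact_hull_least atLeast_exact_filter) auto
  finally show "a \<le> b"
    by auto
qed

theorem mainTheorem11:
  assumes "is_frame TYPE('a::complete_lattice)"
  shows "subfit TYPE('a) \<longleftrightarrow> boolean_poset (exact_filters :: 'a set set) ex_le"
  unfolding boolean_poset_exact_filters_iff[OF assms]
proof (intro iffI ballI)
  fix F :: "'a set"
  assume "subfit TYPE('a)" "F \<in> exact_filters"
  then show "\<exists>G\<in>exact_filters. F \<inter> G = {top} \<and> exact_hull (F \<union> G) = UNIV"
    by (intro bexI[of _ "coannihilator F"] conjI Int_coannihilator exact_hull_Un_coannihilator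
        coannihilator_exact_filter[OF assms])
qed (rule subfit_if_exact_filters_complemented[OF assms])

end
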